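(* With the setup in the context, for every $X\subseteq E\setminus B$ and every $\mathbf{M}\in A^X$, the set $D_{X,\mathbf{M}}$ is an almost affine code of length $n$ and dimension $n-|X|$ over $A$, whose associated matroid has rank function $r_{D_{X,\mathbf{M}}}(Y)=|Y\setminus(B\cup X)|+r(Y\cap(B\cup X))$ for $Y\subseteq E$. In particular this rank function does not depend on $\mathbf{M}$.
   Context: An almost affine code over a finite alphabet $A$ of length $n$ and dimension $k$ is a subset $C\subseteq A^n$ with $|C|=|A|^k$ such that for every $X\subseteq E=\{1,\dots,n\}$, $\log_{|A|}|C_X|$ is a nonnegative integer ($C_X$ = projection onto coordinates $X$); its associated matroid $M_C$ has rank function $r(X)=\log_{|A|}|C_X|$. Setup: $C$ is an almost affine code of length $n$ and dimension $k$ over $A$ with matroid rank function $r$; $B\subseteq E$ is a basis of $M_C$ (so $|B|=r(B)=k$); $\varphi:A\times A\to A$ is a function such that for every $y\in A$ both $\varphi(y,\cdot)$ and $\varphi(\cdot,y)$ are bijections of $A$. For $\mathbf{m}\in A^{E\setminus B}$, $\Phi_{\mathbf{m}}:A^E\to A^E$ is given by $\Phi_{\mathbf{m}}(\mathbf{w})_i=\mathbf{w}_i$ for $i\in B$ and $\Phi_{\mathbf{m}}(\mathbf{w})_i=\varphi(\mathbf{w}_i,\mathbf{m}_i)$ for $i\in E\setminus B$, and $C_{\mathbf{m}}=\Phi_{\mathbf{m}}(C)$. For $X\subseteq E\setminus B$ and $\mathbf{M}\in A^X$, $D_{X,\mathbf{M}}=\bigcup_{\mathbf{m}\in A^{E\setminus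 B},\ \mathbf{m}_X=\mathbf{M}}C_{\mathbf{m}}$. *)

theory Defs
  imports "HOL-Library.FuncSet"
begin

text \<open>Words of length n over the alphabet A are functions on the coordinate set
  E = {1..n} with values in A (extensional: undefined outside E), i.e. PiE E (\<lambda>_. A).\<close>

definition proj_code :: "(nat \<Rightarrow> 'a) set \<Rightarrow> nat set \<Rightarrow> (nat \<Rightarrow> 'a) set" where
  "proj_code C X = (\<lambda>w. restrict w X) ` C"

text \<open>The alphabet is finite with at least two letters so that log base |A| makes sense.\<close>
definition almost_affine_code :: "'a set \<Rightarrow> nat \<Rightarrow> nat \<Rightarrow> (nat \<Rightarrow> 'a) set \<Rightarrow> bool" where
  "almost_affine_code A n k C \<longleftrightarrow>
     finite A \<and> 2 \<le> card A \<and> C \<subseteq> PiE {1..n} (\<lambda>_. A) \<and> card C = card A ^ k \<and>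
     (\<forall>X \<subseteq> {1..n}. \<exists>j::nat. card (proj_code C X) = card A ^ j)"

text \<open>Rank function of the associated matroid: r(X) = log_|A| |C_X|.\<close>
definition code_rank :: "'a set \<Rightarrow> (nat \<Rightarrow> 'a) set \<Rightarrow> nat set \<Rightarrow> nat" where
  "code_rank A C X = (THE j. card (proj_code C X) = card A ^ j)"

definition Phi :: "nat set \<Rightarrow> nat set \<Rightarrow> ('a \<Rightarrow> 'a \<Rightarrow> 'a) \<Rightarrow> (nat \<Rightarrow> 'a) \<Rightarrow> (nat \<Rightarrow> 'a) \<Rightarrow> (nat \<Rightarrow> 'a)" where
  "Phi E B \<phi> m w = (\<lambda>i. if i \<in> B then w i else if i \<in> E then \<phi> (w i) (m i) else undefined)"

definition code_m :: "nat set \<Rightarrow> nat set \<Rightarrow> ('a \<Rightarrow> 'a \<Rightarrow> 'a) \<Rightarrow> (nat \<Rightarrow> 'a) \<Rightarrow> (nat \<Rightarrow> 'a) set \<Rightarrow> (nat \<Rightarrow> 'a) set" where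
  "code_m E B \<phi> m C = Phi E B \<phi> m ` C"

definition D_code :: "'a set \<Rightarrow> nat set \<Rightarrow> nat set \<Rightarrow> ('a \<Rightarrow> 'a \<Rightarrow> 'a) \<Rightarrow> (nat \<Rightarrow> 'a) set
    \<Rightarrow> nat set \<Rightarrow> (nat \<Rightarrow> 'a) \<Rightarrow> (nat \<Rightarrow> 'a) set" where
  "D_code A E B \<phi> C X M =
     (\<Union>m \<in> {m \<in> PiE (E - B) (\<lambda>_. A). restrict m X = M}. code_m E B \<phi> m C)"

end

theory Submission
  imports Defs
begin

text \<open>Write \<open>Z = B \<union> X\<close>. Since \<open>\<phi> (\<cdot>) (M i)\<close> permutes \<open>A\<close> for \<open>i \<in> X\<close> and \<open>\<phi> (w i)\<close> is onto \<open>A\<close>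
  at every coordinate outside \<open>Z\<close>, a word lies in \<open>D\<^sub>X\<^sub>,\<^sub>M\<close> exactly when its restriction to \<open>Z\<close> is
  the image of a codeword under a fixed coordinatewise bijection, its other coordinates being
  arbitrary. Hence the projection of \<open>D\<^sub>X\<^sub>,\<^sub>M\<close> to \<open>Y\<close> has \<open>|C\<^sub>Y\<^sub>\<inter>\<^sub>Z| |A|\<^bsup>|Y - Z|\<^esup>\<close> elements,
  and \<open>r(Z) = k\<close> because \<open>Z\<close> contains the basis \<open>B\<close>.\<close>

definition cylinder :: "nat set \<Rightarrow> 'a set \<Rightarrow> nat set \<Rightarrow> (nat \<Rightarrow> 'a) set \<Rightarrow> (nat \<Rightarrow> 'a) set" where
  "cylinder E A Z S = {d \<in> PiE E (\<lambda>_. A). restrict d Z \<in> S}"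

definition relabel_code :: "(nat \<Rightarrow> 'a \<Rightarrow> 'a) \<Rightarrow> nat set \<Rightarrow> (nat \<Rightarrow> 'a) set \<Rightarrow> (nat \<Rightarrow> 'a) set" where
  "relabel_code g Z C = (\<lambda>w. \<lambda>i\<in>Z. g i (w i)) ` C"

lemma code_rank_eqI:
  assumes "2 \<le> card A" and "card (proj_code C X) = card A ^ j"
  shows "code_rank A C X = j"
  unfolding code_rank_def
proof (rule the_equality)
  fix i assume "card (proj_code C X) = card A ^ i"
  with assms show "i = j" using power_inject_exp[of "card A" i j] by simp
qed (fact assms(2))

lemma card_proj_code_eq_power_rank:
  assumes "almost_affine_code A n k C" and "X \<subseteq> {1..n}"
  shows "card (proj_code C X) = card A ^ code_rank A C X"
proof -
  obtain j where j: "card (proj_code C X) = card A ^ j"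
    using assms unfolding almost_affine_code_def by blast
  with assms(1) show ?thesis
    using code_rank_eqI[OF _ j] by (simp add: almost_affine_code_def)
qed

lemma proj_code_full:
  assumes "C \<subseteq> PiE E (\<lambda>_. A)"
  shows "proj_code C E = C"
proof -
  have "proj_code C E = (\<lambda>w. w) ` C"
    unfolding proj_code_def by (rule image_cong) (use assms in auto)
  then show ?thesis by simp
qed

lemma card_proj_code_mono:
  assumes "finite C" and "Y \<subseteq> Z"
  shows "card (proj_code C Y) \<le> card (proj_code C Z)"
proof -
  have "proj_code C Y = (\<lambda>u. restrict u Y) ` proj_code C Z"
    unfolding proj_code_def image_image
    using assms(2) by (intro image_cong) (auto simp: restrict_def fun_eq_iff)
  then show ?thesis
    using assms(1) unfolding proj_code_def by (metis card_image_le finite_imageI)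
qed

lemma card_proj_code_le:
  assumes "finite C"
  shows "card (proj_code C Z) \<le> card C"
  unfolding proj_code_def using assms by (rule card_image_le)

lemma code_rank_superset_of_full_rank:
  assumes code: "almost_affine_code A n k C" and rank_B: "code_rank A C B = k"
    and "B \<subseteq> Z" and Z: "Z \<subseteq> {1..n}"
  shows "code_rank A C Z = k"
proof -
  have A: "finite A" "2 \<le> card A" and C: "C \<subseteq> PiE {1..n} (\<lambda>_. A)" "card C = card A ^ k"
    using code unfolding almost_affine_code_def by auto
  have "finite C" using finite_subset[OF C(1)] A(1) by (simp add: finite_PiE)
  have "card A ^ k = card (proj_code C B)"
    using card_proj_code_eq_power_rank[OF code] rank_B \<open>B \<subseteq> Z\<close> Z by auto
  also have "\<dots> \<le> card (proj_code C Z)" by (rule card_proj_code_mono) fact+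
  finally have "card (proj_code C Z) = card A ^ k"
    using card_proj_code_le[OF \<open>finite C\<close>, of Z] C(2) by simp
  then show ?thesis by (rule code_rank_eqI[OF A(2)])
qed

lemma card_cylinder:
  assumes "finite A" and "finite Y" and "Z \<subseteq> Y" and S: "S \<subseteq> PiE Z (\<lambda>_. A)"
  shows "card (cylinder Y A Z S) = card S * card A ^ card (Y - Z)"
proof -
  let ?split = "\<lambda>e. (restrict e Z, restrict e (Y - Z))"
  let ?merge = "\<lambda>(u, v). (\<lambda>i. if i \<in> Z then u i else v i)"
  have "bij_betw ?split (cylinder Y A Z S) (S \<times> PiE (Y - Z) (\<lambda>_. A))"
  proof (rule bij_betwI[where g = ?merge])
    have "?merge (u, v) \<in> cylinder Y A Z S"
      if "u \<in> S" and "v \<in> PiE (Y - Z) (\<lambda>_. A)" for u v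
    proof -
      have u: "u \<in> PiE Z (\<lambda>_. A)" using that S by auto
      then have "restrict (?merge (u, v)) Z = u"
        by (auto simp: PiE_def extensional_def fun_eq_iff)
      with u that assms(3) show ?thesis
        by (auto simp: cylinder_def PiE_def Pi_def extensional_def)
    qed
    then show "?merge \<in> S \<times> PiE (Y - Z) (\<lambda>_. A) \<rightarrow> cylinder Y A Z S" by auto
    show "?split (?merge p) = p" if "p \<in> S \<times> PiE (Y - Z) (\<lambda>_. A)" for p
      using that S by (auto simp: PiE_def extensional_def fun_eq_iff)
  qed (use assms(3) in \<open>auto simp: cylinder_def PiE_def extensional_def\<close>)
  then have "card (cylinder Y A Z S) = card S * card (PiE (Y - Z) (\<lambda>_. A))"
    by (simp add: bij_betw_same_card card_cartesian_product)
  then show ?thesis using assms(2) by (simp add: card_PiE)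
qed

lemma proj_code_cylinder:
  assumes "A \<noteq> {}" and "Y \<subseteq> E" and "Z \<subseteq> E" and S: "S \<subseteq> PiE Z (\<lambda>_. A)"
  shows "proj_code (cylinder E A Z S) Y = cylinder Y A (Y \<inter> Z) (proj_code S (Y \<inter> Z))"
proof (intro equalityI subsetI)
  fix e assume "e \<in> proj_code (cylinder E A Z S) Y"
  then obtain d where d: "d \<in> PiE E (\<lambda>_. A)" "restrict d Z \<in> S" and e: "e = restrict d Y"
    unfolding proj_code_def cylinder_def by auto
  have "restrict e (Y \<inter> Z) = restrict (restrict d Z) (Y \<inter> Z)"
    unfolding e by (auto simp: restrict_def)
  then have "restrict e (Y \<inter> Z) \<in> proj_code S (Y \<inter> Z)"
    using d(2) unfolding proj_code_def by blast
  moreover have "e \<in> PiE Y (\<lambda>_. A)" using d(1) assms(2) unfolding e by auto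
  ultimately show "e \<in> cylinder Y A (Y \<inter> Z) (proj_code S (Y \<inter> Z))"
    unfolding cylinder_def by blast
next
  fix e assume "e \<in> cylinder Y A (Y \<inter> Z) (proj_code S (Y \<inter> Z))"
  then obtain s where e: "e \<in> PiE Y (\<lambda>_. A)" and s: "s \<in> S"
    and es: "restrict e (Y \<inter> Z) = restrict s (Y \<inter> Z)"
    unfolding cylinder_def proj_code_def by auto
  obtain a where a: "a \<in> A" using assms(1) by auto
  have sZ: "s \<in> PiE Z (\<lambda>_. A)" using s S by auto
  have agree: "e i = s i" if "i \<in> Y" "i \<in> Z" for i
    using fun_cong[OF es, of i] that by simp
  define d where "d = (\<lambda>i. if i \<in> Y then e i else if i \<in> Z then s i else if i \<in> E then a else undefined)"
  have "restrict d Z = s"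
    using sZ agree by (auto simp: d_def restrict_def fun_eq_iff PiE_def extensional_def)
  moreover have "d \<in> PiE E (\<lambda>_. A)"
    using e sZ a assms(2,3) by (auto simp: d_def PiE_def Pi_def extensional_def)
  moreover have "restrict d Y = e"
    using e by (auto simp: d_def restrict_def fun_eq_iff PiE_def extensional_def)
  ultimately show "e \<in> proj_code (cylinder E A Z S) Y"
    using s unfolding proj_code_def cylinder_def by force
qed

lemma proj_code_relabel_code:
  assumes "Y \<subseteq> Z"
  shows "proj_code (relabel_code g Z C) Y = relabel_code g Y C"
  unfolding proj_code_def relabel_code_def image_image
  using assms by (intro image_cong) (auto simp: restrict_def fun_eq_iff)

lemma relabel_code_subset_PiE:
  assumes "C \<subseteq> PiE E (\<lambda>_. A)" and "Z \<subseteq> E" and "\<And>i. i \<in> Z \<Longrightarrow> g i ` A \<subseteq> A"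
  shows "relabel_code g Z C \<subseteq> PiE Z (\<lambda>_. A)"
  using assms unfolding relabel_code_def by fastforce

lemma card_relabel_code:
  assumes C: "C \<subseteq> PiE E (\<lambda>_. A)" and "Z \<subseteq> E" and inj: "\<And>i. i \<in> Z \<Longrightarrow> inj_on (g i) A"
  shows "card (relabel_code g Z C) = card (proj_code C Z)"
proof -
  let ?relabel = "\<lambda>u. \<lambda>i\<in>Z. g i (u i)"
  have "relabel_code g Z C = ?relabel ` proj_code C Z"
    unfolding relabel_code_def proj_code_def image_image
    by (intro image_cong) (auto simp: fun_eq_iff)
  moreover have "proj_code C Z \<subseteq> PiE Z (\<lambda>_. A)"
    using C assms(2) unfolding proj_code_def by fastforce
  moreover have "inj_on ?relabel (PiE Z (\<lambda>_. A))"
  proof (rule inj_onI)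
    fix u v assume u: "u \<in> PiE Z (\<lambda>_. A)" and v: "v \<in> PiE Z (\<lambda>_. A)"
      and eq: "?relabel u = ?relabel v"
    have "u i = v i" if "i \<in> Z" for i
    proof -
      have "g i (u i) = g i (v i)" using fun_cong[OF eq, of i] that by simp
      with inj[OF that] u v that show ?thesis by (auto dest: inj_onD)
    qed
    with u v show "u = v" by (rule PiE_ext)
  qed
  ultimately show ?thesis by (metis card_image inj_on_subset)
qed

lemma card_proj_code_cylinder_relabel:
  assumes code: "almost_affine_code A n k C" and Z: "Z \<subseteq> {1..n}"
    and g: "\<And>i. i \<in> Z \<Longrightarrow> bij_betw (g i) A A" and Y: "Y \<subseteq> {1..n}"
  shows "card (proj_code (cylinder {1..n} A Z (relabel_code g Z C)) Y)
    = card A ^ (card (Y - Z) + code_rank A C (Y \<inter> Z))"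
proof -
  have A: "finite A" "2 \<le> card A" and C: "C \<subseteq> PiE {1..n} (\<lambda>_. A)"
    using code unfolding almost_affine_code_def by auto
  have "A \<noteq> {}" using A by auto
  have S: "relabel_code g Z C \<subseteq> PiE Z (\<lambda>_. A)"
    using relabel_code_subset_PiE[OF C Z] g by (auto simp: bij_betw_def)
  have proj_S: "proj_code (relabel_code g Z C) (Y \<inter> Z) = relabel_code g (Y \<inter> Z) C"
    by (rule proj_code_relabel_code) auto
  have "card (proj_code (cylinder {1..n} A Z (relabel_code g Z C)) Y)
      = card (relabel_code g (Y \<inter> Z) C) * card A ^ card (Y - Y \<inter> Z)"
    unfolding proj_code_cylinder[OF \<open>A \<noteq> {}\<close> Y Z S] proj_S
  proof (rule card_cylinder)
    show "finite Y" using Y finite_subset by blast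
    show "relabel_code g (Y \<inter> Z) C \<subseteq> PiE (Y \<inter> Z) (\<lambda>_. A)"
      by (rule relabel_code_subset_PiE[OF C]) (use Z g in \<open>auto simp: bij_betw_def\<close>)
  qed (use A in auto)
  also have "card (relabel_code g (Y \<inter> Z) C) = card (proj_code C (Y \<inter> Z))"
    by (rule card_relabel_code[OF C]) (use Z g in \<open>auto simp: bij_betw_def\<close>)
  also have "\<dots> = card A ^ code_rank A C (Y \<inter> Z)"
    using card_proj_code_eq_power_rank[OF code] Z by blast
  also have "Y - Y \<inter> Z = Y - Z" by auto
  finally show ?thesis by (simp add: power_add)
qed

lemma almost_affine_code_cylinder_relabel:
  assumes code: "almost_affine_code A n k C" and Z: "Z \<subseteq> {1..n}"
    and g: "\<And>i. i \<in> Z \<Longrightarrow> bij_betw (g i) A A"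
  defines "D \<equiv> cylinder {1..n} A Z (relabel_code g Z C)"
  shows "almost_affine_code A n (card ({1..n} - Z) + code_rank A C Z) D"
    and "Y \<subseteq> {1..n} \<Longrightarrow> code_rank A D Y = card (Y - Z) + code_rank A C (Y \<inter> Z)"
proof -
  have A: "finite A" "2 \<le> card A" using code unfolding almost_affine_code_def by auto
  have card_proj: "card (proj_code D Y) = card A ^ (card (Y - Z) + code_rank A C (Y \<inter> Z))"
    if "Y \<subseteq> {1..n}" for Y
    unfolding D_def using card_proj_code_cylinder_relabel[OF code Z g that] .
  then show "Y \<subseteq> {1..n} \<Longrightarrow> code_rank A D Y = card (Y - Z) + code_rank A C (Y \<inter> Z)"
    using code_rank_eqI[OF A(2)] by blast
  have D_sub: "D \<subseteq> PiE {1..n} (\<lambda>_. A)" unfolding D_def cylinder_def by blast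
  have "card D = card (proj_code D {1..n})" unfolding proj_code_full[OF D_sub] ..
  also have "\<dots> = card A ^ (card ({1..n} - Z) + code_rank A C Z)"
    using card_proj[of "{1..n}"] Z by (simp add: Int_absorb1)
  finally show "almost_affine_code A n (card ({1..n} - Z) + code_rank A C Z) D"
    using card_proj A D_sub by (auto simp: almost_affine_code_def)
qed

lemma D_code_eq_cylinder:
  assumes C: "C \<subseteq> PiE E (\<lambda>_. A)" and B: "B \<subseteq> E" and X: "X \<subseteq> E - B"
    and phi1: "\<And>y. y \<in> A \<Longrightarrow> bij_betw (\<phi> y) A A"
    and M: "M \<in> PiE X (\<lambda>_. A)"
  shows "D_code A E B \<phi> C X M
    = cylinder E A (B \<union> X) (relabel_code (\<lambda>i x. if i \<in> B then x else \<phi> x (M i)) (B \<union> X) C)"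
    (is "_ = cylinder E A ?Z (relabel_code ?g ?Z C)")
proof (intro equalityI subsetI)
  have phiA: "\<phi> x y \<in> A" if "x \<in> A" "y \<in> A" for x y
    using phi1[OF that(1)] that(2) by (auto simp: bij_betw_def)
  fix d assume "d \<in> D_code A E B \<phi> C X M"
  then obtain m w where m: "m \<in> PiE (E - B) (\<lambda>_. A)" "restrict m X = M" and w: "w \<in> C"
    and d: "d = Phi E B \<phi> m w"
    unfolding D_code_def code_m_def by auto
  have mX: "m i = M i" if "i \<in> X" for i
    using fun_cong[OF m(2), of i] that by simp
  have "d \<in> PiE E (\<lambda>_. A)"
    using w C m B by (auto simp: d Phi_def PiE_def Pi_def extensional_def intro!: phiA)
  moreover have "restrict d ?Z = (\<lambda>i\<in>?Z. ?g i (w i))"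
    using mX X by (auto simp: d Phi_def restrict_def fun_eq_iff)
  ultimately show "d \<in> cylinder E A ?Z (relabel_code ?g ?Z C)"
    using w unfolding cylinder_def relabel_code_def by auto
next
  fix d assume "d \<in> cylinder E A ?Z (relabel_code ?g ?Z C)"
  then obtain w where d: "d \<in> PiE E (\<lambda>_. A)" and w: "w \<in> C"
    and dw: "restrict d ?Z = (\<lambda>i\<in>?Z. ?g i (w i))"
    unfolding cylinder_def relabel_code_def by auto
  have wA: "w i \<in> A" and dA: "d i \<in> A" if "i \<in> E" for i using w C d that by auto
  have agree: "d i = ?g i (w i)" if "i \<in> ?Z" for i
    using fun_cong[OF dw, of i] that by simp
  define m where "m = (\<lambda>i. if i \<in> X then M i
    else if i \<in> E - B then the_inv_into A (\<phi> (w i)) (d i) else undefined)"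
  have inv_A: "the_inv_into A (\<phi> (w i)) (d i) \<in> A"
    and inv_eq: "\<phi> (w i) (the_inv_into A (\<phi> (w i)) (d i)) = d i" if "i \<in> E" for i
    using bij_betwE[OF bij_betw_the_inv_into[OF phi1[OF wA[OF that]]]] dA[OF that]
      f_the_inv_into_f_bij_betw[OF phi1[OF wA[OF that]]] by auto
  have "m \<in> PiE (E - B) (\<lambda>_. A)"
    using X M inv_A unfolding m_def by (auto simp: PiE_def Pi_def extensional_def)
  moreover have "restrict m X = M"
    using M by (auto simp: m_def restrict_def fun_eq_iff PiE_def extensional_def)
  moreover have "Phi E B \<phi> m w = d"
  proof
    fix i
    show "Phi E B \<phi> m w i = d i"
      using agree[of i] inv_eq[of i] d X by (auto simp: Phi_def m_def PiE_def extensional_def)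
  qed
  ultimately show "d \<in> D_code A E B \<phi> C X M"
    using w unfolding D_code_def code_m_def by blast
qed

theorem mainTheorem8:
  fixes A :: "'a set" and n k :: nat and C :: "(nat \<Rightarrow> 'a) set"
    and B X :: "nat set" and \<phi> :: "'a \<Rightarrow> 'a \<Rightarrow> 'a" and M :: "nat \<Rightarrow> 'a"
  assumes code: "almost_affine_code A n k C"
    and B_sub: "B \<subseteq> {1..n}" and B_card: "card B = k" and B_rank: "code_rank A C B = k"
    and phi1: "\<And>y. y \<in> A \<Longrightarrow> bij_betw (\<phi> y) A A"
    and phi2: "\<And>y. y \<in> A \<Longrightarrow> bij_betw (\<lambda>x. \<phi> x y) A A"
    and X_sub: "X \<subseteq> {1..n} - B"
    and M_in: "M \<in> PiE X (\<lambda>_. A)"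
  shows "almost_affine_code A n (n - card X) (D_code A {1..n} B \<phi> C X M)
     \<and> (\<forall>Y \<subseteq> {1..n}. code_rank A (D_code A {1..n} B \<phi> C X M) Y
            = card (Y - (B \<union> X)) + code_rank A C (Y \<inter> (B \<union> X)))"
proof -
  let ?g = "\<lambda>i x. if i \<in> B then x else \<phi> x (M i)"
  let ?D = "D_code A {1..n} B \<phi> C X M"
  have C: "C \<subseteq> PiE {1..n} (\<lambda>_. A)" using code unfolding almost_affine_code_def by auto
  have Z: "B \<union> X \<subseteq> {1..n}" using B_sub X_sub by auto
  have g: "bij_betw (?g i) A A" if "i \<in> B \<union> X" for i
  proof (cases "i \<in> B")
    case False
    then have "i \<in> X" using that by blast
    with False M_in phi2 show ?thesis by auto
  qed (simp add: bij_betw_id[unfolded id_def])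
  have D: "?D = cylinder {1..n} A (B \<union> X) (relabel_code ?g (B \<union> X) C)"
    using D_code_eq_cylinder[OF C B_sub X_sub phi1 M_in] .
  have "code_rank A C (B \<union> X) = k"
    using code_rank_superset_of_full_rank[OF code B_rank] Z by blast
  moreover have "card (B \<union> X) = k + card X"
    using B_card X_sub finite_subset[OF Z] by (subst card_Un_disjoint) auto
  moreover have "card (B \<union> X) \<le> n" using card_mono[OF _ Z] by simp
  ultimately have dim: "card ({1..n} - (B \<union> X)) + code_rank A C (B \<union> X) = n - card X"
    using card_Diff_subset[OF finite_subset[OF Z] Z] by simp
  show ?thesis
    using almost_affine_code_cylinder_relabel[where g = ?g, OF code Z g] unfolding D dim by blast
qed

end
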